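(* Let $f$ be the morphism on $\{0,1\}$ given by $f(0)=10$, $f(1)=0101$, so that $f^2(0)=010110$ and $f^2(1)=100101100101$. The infinite fixed point of $f^2$ beginning with $0$ is $3$-automatic.
   Context: For an integer $q\ge 2$, a sequence is $q$-automatic if it is the image under a letter-to-letter map of a fixed point of a morphism all of whose letter-images have length $q$. *)

theory Defs
  imports Main
begin

definition morph_word :: "('a \<Rightarrow> 'a list) \<Rightarrow> 'a list \<Rightarrow> 'a list" where
  "morph_word g u = concat (map g u)"

text \<open>An infinite word x :: nat => 'a is a fixed point of g if g(x) = x, i.e.
  for every n the image of the length-n prefix of x is a prefix of x.\<close>
definition is_fixed_point :: "('a \<Rightarrow> 'a list) \<Rightarrow> (nat \<Rightarrow> 'a) \<Rightarrow> bool" where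
  "is_fixed_point g x \<longleftrightarrow>
     (\<forall>n. \<forall>i < length (morph_word g (map x [0..<n])).
        x i = morph_word g (map x [0..<n]) ! i)"

text \<open>q-automatic: image under a letter-to-letter map of a fixed point of a
  q-uniform morphism on a finite alphabet (alphabet encoded as a finite set of naturals).\<close>
definition q_automatic :: "nat \<Rightarrow> (nat \<Rightarrow> 'b) \<Rightarrow> bool" where
  "q_automatic q s \<longleftrightarrow>
     (\<exists>(A :: nat set) (\<phi> :: nat \<Rightarrow> nat list) (w :: nat \<Rightarrow> nat) (\<tau> :: nat \<Rightarrow> 'b).
        finite A \<and>
        (\<forall>a\<in>A. length (\<phi> a) = q \<and> set (\<phi> a) \<subseteq> A) \<and>
        (\<forall>n. w n \<in> A) \<and>
        is_fixed_point \<phi> w \<and>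
        (\<forall>n. s n = \<tau> (w n)))"

definition f_morph :: "nat \<Rightarrow> nat list" where
  "f_morph a = (if a = 0 then [1,0] else [0,1,0,1])"

definition f2_morph :: "nat \<Rightarrow> nat list" where
  "f2_morph a = morph_word f_morph (f_morph a)"

end

theory Submission
  imports Defs "HOL-Library.Countable_Set"
begin

text \<open>Write \<open>f\<^sup>2 = B \<circ> h\<close> with \<open>h: 0 \<mapsto> 0, 1 \<mapsto> 11\<close> and
  \<open>B: 0 \<mapsto> 010110, 1 \<mapsto> 100101\<close>. The conjugate morphism \<open>\<psi> = h \<circ> B\<close> is 9-uniform;
  if \<open>y\<close> is its fixed point starting with 0, then \<open>x = B(y)\<close> is the fixed point of \<open>f\<^sup>2\<close>,
  since \<open>f\<^sup>2(B(y)) = B(\<psi>(y)) = B(y)\<close>, and \<open>x n\<close> is letter \<open>n mod 6\<close> of \<open>B(y(n div 6))\<close>.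
  Reading \<open>n\<close> in base 3, the triple \<open>(y(n div 2), y(n div 6), n mod 6)\<close> determines \<open>x n\<close>
  and the triples at \<open>3n, 3n+1, 3n+2\<close>, so it is the state of a 3-uniform morphism
  generating \<open>x\<close>. Uniqueness of the fixed point holds because \<open>f\<^sup>2\<close> is expanding.\<close>

lemma morph_word_append: "morph_word g (u @ v) = morph_word g u @ morph_word g v"
  by (simp add: morph_word_def)

lemma morph_word_morph_word:
  "morph_word g (morph_word h u) = morph_word (\<lambda>a. morph_word g (h a)) u"
  by (induction u) (auto simp: morph_word_def)

lemma length_morph_word_ge:
  assumes "\<And>a. length (g a) \<ge> k"
  shows "length (morph_word g u) \<ge> k * length u"
  using assms by (induction u) (auto simp: morph_word_def intro: add_mono)

lemma morph_word_prefix_uniform: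
  assumes "\<And>a. length (g a) = q"
  shows "morph_word g (map w [0..<n]) = map (\<lambda>i. g (w (i div q)) ! (i mod q)) [0..<q * n]"
proof (induction n)
  case 0
  then show ?case by (simp add: morph_word_def)
next
  case (Suc n)
  let ?x = "\<lambda>i. g (w (i div q)) ! (i mod q)"
  have "map ?x [q * n..<q * n + q] = map (\<lambda>j. g (w n) ! j) [0..<q]"
    by (rule nth_equalityI) (auto simp: add.commute)
  also have "\<dots> = g (w n)"
    by (metis assms map_nth)
  finally have "map ?x [q * n..<q * n + q] = g (w n)" .
  moreover have "[0..<q * Suc n] = [0..<q * n] @ [q * n..<q * n + q]"
    by (metis upt_add_eq_append zero_le mult_Suc_right add.commute)
  ultimately have "map ?x [0..<q * Suc n] = map ?x [0..<q * n] @ g (w n)"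
    by simp
  then show ?case
    using Suc by (simp add: morph_word_append) (simp add: morph_word_def)
qed

lemma is_fixed_pointI_prefix_images:
  assumes "\<And>n. \<exists>m \<ge> n. \<exists>k. morph_word g (map x [0..<m]) = map x [0..<k]"
  shows "is_fixed_point g x"
  unfolding is_fixed_point_def
proof (intro allI impI)
  fix n i
  assume i: "i < length (morph_word g (map x [0..<n]))"
  obtain m k where "m \<ge> n" and image: "morph_word g (map x [0..<m]) = map x [0..<k]"
    using assms by blast
  then have "[0..<m] = [0..<n] @ [n..<m]"
    by (metis le_add_diff_inverse upt_add_eq_append zero_le)
  then have split: "map x [0..<k] = morph_word g (map x [0..<n]) @ morph_word g (map x [n..<m])"
    by (simp flip: image add: morph_word_append)
  then have "i < k"
    using i by (metis length_append length_map length_upt minus_nat.diff_0 trans_less_add1)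
  then have "x i = map x [0..<k] ! i"
    by simp
  also have "\<dots> = morph_word g (map x [0..<n]) ! i"
    using i by (simp add: split nth_append)
  finally show "x i = morph_word g (map x [0..<n]) ! i" .
qed

lemma is_fixed_point_uniformI:
  assumes "\<And>a. length (g a) = q"
    and "\<And>i. w i = g (w (i div q)) ! (i mod q)"
  shows "is_fixed_point g w"
proof (rule is_fixed_pointI_prefix_images)
  fix n
  have "morph_word g (map w [0..<n]) = map w [0..<q * n]"
    by (simp add: morph_word_prefix_uniform[OF assms(1)] flip: assms(2))
  then show "\<exists>m \<ge> n. \<exists>k. morph_word g (map w [0..<m]) = map w [0..<k]"
    by blast
qed

lemma fixed_points_eqI:
  assumes "\<And>a. length (g a) \<ge> 2"
    and "is_fixed_point g x" "is_fixed_point g x'" "x 0 = x' 0"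
  shows "x n = x' n"
proof (induction n rule: less_induct)
  case (less n)
  show ?case
  proof (cases "n = 0")
    case True
    with assms(4) show ?thesis by simp
  next
    case False
    have prefix: "map x [0..<n] = map x' [0..<n]"
      using less by simp
    have "n < 2 * n" using False by simp
    also have "\<dots> \<le> length (morph_word g (map x [0..<n]))"
      using length_morph_word_ge[OF assms(1), of "map x [0..<n]"] by simp
    finally have "n < length (morph_word g (map x [0..<n]))" .
    then show ?thesis
      using assms(2,3) prefix unfolding is_fixed_point_def by metis
  qed
qed

text \<open>States may be taken from any type: a finite set of states is numbered by \<open>to_nat_on\<close>.\<close>

lemma q_automaticI:
  fixes W :: "nat \<Rightarrow> 'c" and \<delta> :: "'c \<Rightarrow> nat \<Rightarrow> 'c" and \<tau> :: "'c \<Rightarrow> 'b"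
  assumes "q > 0" and "finite (range W)"
    and step: "\<And>n r. r < q \<Longrightarrow> W (q * n + r) = \<delta> (W n) r"
    and out: "\<And>n. s n = \<tau> (W n)"
  shows "q_automatic q s"
proof -
  define e where "e = to_nat_on (range W)"
  define d where "d = from_nat_into (range W)"
  have countable: "countable (range W)"
    using assms(2) by (rule countable_finite)
  have d_e [simp]: "d (e (W n)) = W n" for n
    unfolding d_def e_def using countable by simp
  define \<phi> where "\<phi> a = map (\<lambda>r. e (\<delta> (d a) r)) [0..<q]" for a
  have "finite (e ` range W)"
    using assms(2) by simp
  moreover have "\<forall>a \<in> e ` range W. length (\<phi> a) = q \<and> set (\<phi> a) \<subseteq> e ` range W"
  proof (intro ballI conjI)
    fix a
    assume "a \<in> e ` range W"
    then obtain n where a: "a = e (W n)"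
      by blast
    show "length (\<phi> a) = q"
      by (simp add: \<phi>_def)
    have "e (\<delta> (W n) r) \<in> e ` range W" if "r < q" for r
      using step[OF that, of n] by (metis rangeI image_eqI)
    then show "set (\<phi> a) \<subseteq> e ` range W"
      by (auto simp: \<phi>_def a)
  qed
  moreover have "\<forall>n. e (W n) \<in> e ` range W"
    by simp
  moreover have "is_fixed_point \<phi> (e \<circ> W)"
  proof (rule is_fixed_point_uniformI)
    show "length (\<phi> a) = q" for a
      by (simp add: \<phi>_def)
    show "(e \<circ> W) i = \<phi> ((e \<circ> W) (i div q)) ! (i mod q)" for i
      using \<open>q > 0\<close> step[of "i mod q" "i div q"] by (simp add: \<phi>_def)
  qed
  moreover have "\<forall>n. s n = (\<tau> \<circ> d) ((e \<circ> W) n)"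
    by (simp add: out)
  ultimately show ?thesis
    unfolding q_automatic_def
    by (intro exI[of _ "e ` range W"] exI[of _ \<phi>] exI[of _ "e \<circ> W"] exI[of _ "\<tau> \<circ> d"]) simp
qed

definition h_morph :: "nat \<Rightarrow> nat list" where
  "h_morph a = (if a = 0 then [0] else [1, 1])"

definition b_morph :: "nat \<Rightarrow> nat list" where
  "b_morph a = (if a = 0 then [0, 1, 0, 1, 1, 0] else [1, 0, 0, 1, 0, 1])"

definition psi_morph :: "nat \<Rightarrow> nat list" where
  "psi_morph a = morph_word h_morph (b_morph a)"

lemma f2_morph_eq: "f2_morph = (\<lambda>a. morph_word b_morph (h_morph a))"
  by (auto simp: f2_morph_def f_morph_def morph_word_def b_morph_def h_morph_def)

lemma length_f2_morph_ge: "length (f2_morph a) \<ge> 2"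
  by (simp add: f2_morph_def f_morph_def morph_word_def)

lemma length_b_morph: "length (b_morph a) = 6"
  by (simp add: b_morph_def)

lemma length_psi_morph: "length (psi_morph a) = 9"
  by (simp add: psi_morph_def b_morph_def h_morph_def morph_word_def)

lemma psi_morph_nth_le: "j < 9 \<Longrightarrow> psi_morph a ! j \<le> 1"
  by (auto simp: psi_morph_def b_morph_def h_morph_def morph_word_def less_Suc_eq nth_Cons
      split: nat.splits)

fun psi_fixed_point :: "nat \<Rightarrow> nat" where
  "psi_fixed_point n =
     (if n = 0 then 0 else psi_morph (psi_fixed_point (n div 9)) ! (n mod 9))"

declare psi_fixed_point.simps [simp del]

lemma psi_fixed_point_0: "psi_fixed_point 0 = 0"
  by (subst psi_fixed_point.simps) simp

lemma psi_fixed_point_eq: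
  "psi_fixed_point n = psi_morph (psi_fixed_point (n div 9)) ! (n mod 9)"
proof (cases "n = 0")
  case True
  then show ?thesis
    by (simp add: psi_fixed_point_0 psi_morph_def b_morph_def h_morph_def morph_word_def)
next
  case False
  then show ?thesis
    by (subst psi_fixed_point.simps) simp
qed

lemma psi_fixed_point_le: "psi_fixed_point n \<le> 1"
  using psi_morph_nth_le[of "n mod 9"] by (subst psi_fixed_point_eq) simp

lemma morph_word_psi_prefix:
  "morph_word psi_morph (map psi_fixed_point [0..<m]) = map psi_fixed_point [0..<9 * m]"
  by (simp add: morph_word_prefix_uniform[OF length_psi_morph] flip: psi_fixed_point_eq)

definition f2_fixed_point :: "nat \<Rightarrow> nat" where
  "f2_fixed_point n = b_morph (psi_fixed_point (n div 6)) ! (n mod 6)"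

lemma f2_fixed_point_prefix:
  "map f2_fixed_point [0..<6 * m] = morph_word b_morph (map psi_fixed_point [0..<m])"
  by (simp add: morph_word_prefix_uniform[OF length_b_morph] f2_fixed_point_def)

lemma is_fixed_point_f2_fixed_point: "is_fixed_point f2_morph f2_fixed_point"
proof (rule is_fixed_pointI_prefix_images)
  fix n
  have "morph_word f2_morph (map f2_fixed_point [0..<6 * n])
        = morph_word b_morph (morph_word psi_morph (map psi_fixed_point [0..<n]))"
    by (simp add: f2_fixed_point_prefix morph_word_morph_word f2_morph_eq psi_morph_def)
  also have "\<dots> = map f2_fixed_point [0..<6 * (9 * n)]"
    by (simp only: morph_word_psi_prefix f2_fixed_point_prefix)
  finally show "\<exists>m \<ge> n. \<exists>k. morph_word f2_morph (map f2_fixed_point [0..<m]) = map f2_fixed_point [0..<k]"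
    by (intro exI[of _ "6 * n"]) auto
qed

lemma f2_fixed_point_0: "f2_fixed_point 0 = 0"
  by (simp add: f2_fixed_point_def psi_fixed_point_0 b_morph_def)

lemma three_mul_add_div_mod:
  fixes n r :: nat
  assumes "r < 3"
  shows "(3 * n + r) div 2 = 9 * (n div 6) + (3 * (n mod 6) + r) div 2"
    and "(3 * (n mod 6) + r) div 2 < 9"
    and "(3 * n + r) div 6 = n div 2"
    and "(3 * n + r) mod 6 = (3 * (n mod 6) + r) mod 6"
proof -
  define q c where "q = n div 6" and "c = n mod 6"
  have c: "c < 6" by (simp add: c_def)
  have n: "n = c + q * 6" by (simp add: q_def c_def)
  have small: "(3 * c + r) div 6 = c div 2" "(3 * c + r) div 2 < 9"
    using c assms by (auto simp: less_Suc_eq)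
  have "3 * n + r = (3 * c + r) + (9 * q) * 2"
    using n by simp
  then show "(3 * n + r) div 2 = 9 * (n div 6) + (3 * (n mod 6) + r) div 2"
    by (simp add: q_def c_def)
  show "(3 * (n mod 6) + r) div 2 < 9"
    using small by (simp add: c_def)
  have 6: "3 * n + r = (3 * c + r) + (3 * q) * 6"
    using n by simp
  have "n = c + (3 * q) * 2"
    using n by simp
  then have "n div 2 = 3 * q + c div 2"
    by simp
  with 6 small show "(3 * n + r) div 6 = n div 2"
    by simp
  have "(3 * n + r) mod 6 = (3 * c + r) mod 6"
    unfolding 6 by (rule mod_mult_self1)
  then show "(3 * n + r) mod 6 = (3 * (n mod 6) + r) mod 6"
    by (simp add: c_def)
qed

definition f2_state :: "nat \<Rightarrow> nat \<times> nat \<times> nat" where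
  "f2_state n = (psi_fixed_point (n div 2), psi_fixed_point (n div 6), n mod 6)"

definition f2_transition :: "nat \<times> nat \<times> nat \<Rightarrow> nat \<Rightarrow> nat \<times> nat \<times> nat" where
  "f2_transition = (\<lambda>(a, b, c) r. (psi_morph b ! ((3 * c + r) div 2), a, (3 * c + r) mod 6))"

lemma f2_state_step:
  assumes "r < 3"
  shows "f2_state (3 * n + r) = f2_transition (f2_state n) r"
  using three_mul_add_div_mod[OF assms, of n]
    psi_fixed_point_eq[of "(3 * n + r) div 2"]
  by (simp add: f2_state_def f2_transition_def)

lemma finite_range_f2_state: "finite (range f2_state)"
proof (rule finite_subset)
  show "range f2_state \<subseteq> {..1} \<times> {..1} \<times> {..<6}"
    using psi_fixed_point_le by (auto simp: f2_state_def)
qed simp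

lemma q_automatic_f2_fixed_point: "q_automatic 3 f2_fixed_point"
proof (rule q_automaticI)
  show "finite (range f2_state)"
    by (rule finite_range_f2_state)
  show "f2_state (3 * n + r) = f2_transition (f2_state n) r" if "r < 3" for n r
    using that by (rule f2_state_step)
  show "f2_fixed_point n = (\<lambda>(a, b, c). b_morph b ! c) (f2_state n)" for n
    by (simp add: f2_state_def f2_fixed_point_def)
qed simp

theorem mainTheorem6:
  shows "(\<exists>x :: nat \<Rightarrow> nat. x 0 = 0 \<and> is_fixed_point f2_morph x) \<and>
         (\<forall>x :: nat \<Rightarrow> nat. x 0 = 0 \<and> is_fixed_point f2_morph x \<longrightarrow> q_automatic 3 x)"
proof (intro conjI allI impI)
  show "\<exists>x :: nat \<Rightarrow> nat. x 0 = 0 \<and> is_fixed_point f2_morph x"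
    using f2_fixed_point_0 is_fixed_point_f2_fixed_point by blast
  fix x :: "nat \<Rightarrow> nat"
  assume "x 0 = 0 \<and> is_fixed_point f2_morph x"
  then have "x = f2_fixed_point"
    using fixed_points_eqI[OF length_f2_morph_ge _ is_fixed_point_f2_fixed_point]
      f2_fixed_point_0 by auto
  then show "q_automatic 3 x"
    using q_automatic_f2_fixed_point by simp
qed

end
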